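(* Let $(\varphi_\alpha)_{\alpha>0}$ be a non-linear regularizing filter and fix $\alpha>0$. Then $\operatorname{ran}(\mathbf{M}_\kappa^+\circ\Phi_{\alpha,\kappa})\subseteq\operatorname{dom}(\mathcal{R}_\alpha)$, and moreover $\operatorname{ran}(\mathbf{M}_\kappa^+\circ\Phi_{\alpha,\kappa})\subseteq\operatorname{dom}(\partial\mathcal{R}_\alpha)$.
   Context: $\Lambda$ is an at most countable index set and $\kappa=(\kappa_\lambda)_{\lambda\in\Lambda}\in(0,\infty)^\Lambda$ with $\sup_\lambda\kappa_\lambda<\infty$. $\mathbf{M}_\kappa\colon\ell^2(\Lambda)\to\ell^2(\Lambda)$, $(x_\lambda)\mapsto(\kappa_\lambda x_\lambda)$; $\mathbf{M}_\kappa^+$ is its Moore–Penrose inverse, with domain $\{(c_\lambda)\in\ell^2:(c_\lambda/\kappa_\lambda)\in\ell^2\}$ and $\mathbf{M}_\kappa^+((c_\lambda))=(c_\lambda/\kappa_\lambda)$. A non-linear regularizing filter is a family $(\varphi_\alpha)_{\alpha>0}$ of functions $\varphi_\alpha\colon(0,\infty)\times\mathbb{R}\to\mathbb{R}$ such that for all $\alpha,\kappa>0$: (F1) $\varphi_\alpha(\kappa,\cdot)$ is non-decreasing; (F2) $\varphi_\alpha(\kappa,\cdot)$ is 1-Lipschitz; (F3) $\varphi_\alpha(\kappa,0)=0$; (F4) $\lim_{\alpha\to0}\varphi_\alpha(\kappa,c)=c$ for all $c\in\mathbb{R}$. $\Phi_{\alpha,\kappa}((c_\lambda))=(\varphi_\alpha(\kappa_\lambda,c_\lambda))_\lambda$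 on $\ell^2(\Lambda)$; $\operatorname{dom}(\mathbf{M}_\kappa^+\circ\Phi_{\alpha,\kappa})=\{z:\Phi_{\alpha,\kappa}(z)\in\operatorname{dom}(\mathbf{M}_\kappa^+)\}$. $\kappa$-regularizer: for each $\alpha>0,\lambda\in\Lambda$ let $s_{\alpha,\lambda}\colon\mathbb{R}\to\mathbb{R}\cup\{\infty\}$ be proper, convex, lower semi-continuous with $s_{\alpha,\lambda}\ge s_{\alpha,\lambda}(0)=0$ and $\varphi_\alpha(\kappa_\lambda,\cdot)=\operatorname{prox}_{s_{\alpha,\lambda}}$ (such functions exist); then $\mathcal{R}_\alpha((x_\lambda)_\lambda):=\sum_{\lambda}s_{\alpha,\lambda}(\kappa_\lambda x_\lambda)$ on $\ell^2(\Lambda)$. Here $\operatorname{prox}_f(x)=\operatorname{argmin}_y\tfrac12|x-y|^2+f(y)$, $\operatorname{dom}(\mathcal{R})=\{x:\mathcal{R}(x)<\infty\}$ and $\partial$ denotes the convex subdifferential. *)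

theory Defs
  imports "HOL-Analysis.Analysis" "HOL-Library.Extended_Real"
begin

definition l2 :: "('i \<Rightarrow> real) set" where
  "l2 = {x. (\<lambda>i. (x i)\<^sup>2) summable_on UNIV}"

definition l2_inner :: "('i \<Rightarrow> real) \<Rightarrow> ('i \<Rightarrow> real) \<Rightarrow> real" where
  "l2_inner x y = (\<Sum>\<^sub>\<infinity>i. x i * y i)"

definition M_op :: "('i \<Rightarrow> real) \<Rightarrow> ('i \<Rightarrow> real) \<Rightarrow> ('i \<Rightarrow> real)" where
  "M_op \<kappa> x = (\<lambda>i. \<kappa> i * x i)"

definition M_pinv_dom :: "('i \<Rightarrow> real) \<Rightarrow> ('i \<Rightarrow> real) set" where
  "M_pinv_dom \<kappa> = {c. c \<in> l2 \<and> (\<lambda>i. c i / \<kappa> i) \<in> l2}"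

definition M_pinv :: "('i \<Rightarrow> real) \<Rightarrow> ('i \<Rightarrow> real) \<Rightarrow> ('i \<Rightarrow> real)" where
  "M_pinv \<kappa> c = (\<lambda>i. c i / \<kappa> i)"

definition nonlinear_reg_filter :: "(real \<Rightarrow> real \<Rightarrow> real \<Rightarrow> real) \<Rightarrow> bool" where
  "nonlinear_reg_filter \<phi> \<longleftrightarrow>
     (\<forall>\<alpha>>0. \<forall>k>0.
        mono (\<phi> \<alpha> k) \<and>
        (\<forall>c d. \<bar>\<phi> \<alpha> k c - \<phi> \<alpha> k d\<bar> \<le> \<bar>c - d\<bar>) \<and>
        \<phi> \<alpha> k 0 = 0) \<and>
     (\<forall>k>0. \<forall>c. ((\<lambda>\<alpha>. \<phi> \<alpha> k c) \<longlongrightarrow> c) (at_right 0))"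

definition Phi_op :: "(real \<Rightarrow> real \<Rightarrow> real \<Rightarrow> real) \<Rightarrow> real \<Rightarrow> ('i \<Rightarrow> real) \<Rightarrow> ('i \<Rightarrow> real) \<Rightarrow> ('i \<Rightarrow> real)" where
  "Phi_op \<phi> \<alpha> \<kappa> c = (\<lambda>i. \<phi> \<alpha> (\<kappa> i) (c i))"

definition MPhi_dom :: "(real \<Rightarrow> real \<Rightarrow> real \<Rightarrow> real) \<Rightarrow> real \<Rightarrow> ('i \<Rightarrow> real) \<Rightarrow> ('i \<Rightarrow> real) set" where
  "MPhi_dom \<phi> \<alpha> \<kappa> = {z. z \<in> l2 \<and> Phi_op \<phi> \<alpha> \<kappa> z \<in> M_pinv_dom \<kappa>}"

definition MPhi_ran :: "(real \<Rightarrow> real \<Rightarrow> real \<Rightarrow> real) \<Rightarrow> real \<Rightarrow> ('i \<Rightarrow> real) \<Rightarrow> ('i \<Rightarrow> real) set" where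
  "MPhi_ran \<phi> \<alpha> \<kappa> = (\<lambda>z. M_pinv \<kappa> (Phi_op \<phi> \<alpha> \<kappa> z)) ` MPhi_dom \<phi> \<alpha> \<kappa>"

definition proper_fun :: "(real \<Rightarrow> ereal) \<Rightarrow> bool" where
  "proper_fun f \<longleftrightarrow> (\<forall>x. f x \<noteq> -\<infinity>) \<and> (\<exists>x. f x \<noteq> \<infinity>)"

definition convex_efun :: "(real \<Rightarrow> ereal) \<Rightarrow> bool" where
  "convex_efun f \<longleftrightarrow> (\<forall>x y t. 0 \<le> t \<and> t \<le> 1 \<longrightarrow>
      f ((1 - t) * x + t * y) \<le> ereal (1 - t) * f x + ereal t * f y)"

definition lsc_efun :: "(real \<Rightarrow> ereal) \<Rightarrow> bool" where
  "lsc_efun f \<longleftrightarrow> (\<forall>x. f x \<le> Liminf (at x) f)"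

definition prox :: "(real \<Rightarrow> ereal) \<Rightarrow> real \<Rightarrow> real" where
  "prox f x = (THE y. \<forall>z. ereal ((x - y)\<^sup>2 / 2) + f y \<le> ereal ((x - z)\<^sup>2 / 2) + f z)"

text \<open>The kappa-regularizer R_alpha(x) = sum_i s_{alpha,i}(kappa_i x_i) of nonnegative
  extended reals: finite iff all terms finite and summable, infinite otherwise.\<close>
definition reg_R :: "(real \<Rightarrow> 'i \<Rightarrow> real \<Rightarrow> ereal) \<Rightarrow> ('i \<Rightarrow> real) \<Rightarrow> real \<Rightarrow> ('i \<Rightarrow> real) \<Rightarrow> ereal" where
  "reg_R s \<kappa> \<alpha> x =
    (if (\<forall>i. s \<alpha> i (\<kappa> i * x i) \<noteq> \<infinity>) \<and>
        (\<lambda>i. real_of_ereal (s \<alpha> i (\<kappa> i * x i))) summable_on UNIV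
     then ereal (\<Sum>\<^sub>\<infinity>i. real_of_ereal (s \<alpha> i (\<kappa> i * x i)))
     else \<infinity>)"

definition efun_dom :: "(('i \<Rightarrow> real) \<Rightarrow> ereal) \<Rightarrow> ('i \<Rightarrow> real) set" where
  "efun_dom R = {x. x \<in> l2 \<and> R x < \<infinity>}"

definition subdiff_l2 :: "(('i \<Rightarrow> real) \<Rightarrow> ereal) \<Rightarrow> ('i \<Rightarrow> real) \<Rightarrow> ('i \<Rightarrow> real) set" where
  "subdiff_l2 R x = {\<xi>. \<xi> \<in> l2 \<and>
      (\<forall>y\<in>l2. R y \<ge> R x + ereal (l2_inner \<xi> (\<lambda>i. y i - x i)))}"

definition subdiff_dom :: "(('i \<Rightarrow> real) \<Rightarrow> ereal) \<Rightarrow> ('i \<Rightarrow> real) set" where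
  "subdiff_dom R = {x. x \<in> l2 \<and> subdiff_l2 R x \<noteq> {}}"

end

theory Submission
  imports Defs
begin

text \<open>Write \<open>p\<^sub>i = \<phi>\<^sub>\<alpha>(\<kappa>\<^sub>i, z\<^sub>i) = prox\<^bsub>s\<^sub>i\<^esub>(z\<^sub>i)\<close>, so that a point of the range is
  \<open>x\<^sub>i = p\<^sub>i / \<kappa>\<^sub>i\<close>. The one-dimensional optimality condition of the proximal point says that
  \<open>z\<^sub>i - p\<^sub>i\<close> is a subgradient of \<open>s\<^sub>i\<close> at \<open>p\<^sub>i\<close>. Evaluated at \<open>0\<close> it gives
  \<open>0 \<le> s\<^sub>i(p\<^sub>i) \<le> (z\<^sub>i - p\<^sub>i) p\<^sub>i\<close>, which is summable because \<open>z - p\<close> and \<open>p\<close> are in \<open>l2\<close>;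
  hence \<open>reg_R s \<kappa> \<alpha> x < \<infinity>\<close>. Summing the componentwise subgradient inequalities shows that
  \<open>(\<kappa>\<^sub>i (z\<^sub>i - p\<^sub>i))\<^sub>i\<close>, which lies in \<open>l2\<close> since \<open>\<kappa>\<close> is bounded, is a subgradient of \<open>reg_R s \<kappa> \<alpha>\<close> at \<open>x\<close>.\<close>

lemma lsc_efun_eventually_greater:
  assumes "lsc_efun f" and "ereal t < f y"
  shows "eventually (\<lambda>x. ereal t < f x) (nhds y)"
proof -
  have "ereal t < Liminf (at y) f"
    using assms unfolding lsc_efun_def by (meson order_less_le_trans)
  then have "eventually (\<lambda>x. ereal t < f x) (at y)"
    using le_Liminf_iff by blast
  then have "eventually (\<lambda>x. x \<noteq> y \<longrightarrow> ereal t < f x) (nhds y)"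
    by (simp add: eventually_at_filter)
  then show ?thesis
    by (rule eventually_mono) (use assms(2) in blast)
qed

lemma closed_sublevel_continuous_add_lsc:
  fixes q :: "real \<Rightarrow> real" and f :: "real \<Rightarrow> ereal"
  assumes "continuous_on UNIV q" and "lsc_efun f"
  shows "closed {y. ereal (q y) + f y \<le> ereal c}"
proof -
  let ?U = "{y. ereal c < ereal (q y) + f y}"
  have "\<exists>T. open T \<and> y \<in> T \<and> T \<subseteq> ?U" if "y \<in> ?U" for y
  proof -
    from that have "ereal (c - q y) < f y"
      using ereal_minus_less[of "ereal (q y)" "ereal c" "f y"] by (simp add: add.commute)
    then obtain t where t: "c - q y < t" "ereal t < f y"
      using ereal_dense2 by (metis less_ereal.simps(1))
    have "eventually (\<lambda>x. ereal t < f x) (nhds y)"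
      using lsc_efun_eventually_greater[OF assms(2) t(2)] .
    moreover have "eventually (\<lambda>x. c - t < q x) (nhds y)"
      using assms(1) t(1) by (intro order_tendstoD(1)[where f=q and y="q y"])
        (auto simp: continuous_on_def tendsto_at_iff_tendsto_nhds)
    ultimately obtain T where T: "open T" "y \<in> T" "\<forall>x\<in>T. ereal t < f x \<and> c - t < q x"
      unfolding eventually_conj_iff[symmetric] eventually_nhds by blast
    have "ereal c < ereal (q x) + f x" if "ereal t < f x" "c - t < q x" for x
      using ereal_add_strict_mono2[of "ereal (c - t)" "ereal (q x)" "ereal t" "f x"] that by simp
    with T show ?thesis
      by blast
  qed
  then have "open ?U"
    using open_subopen[of ?U] by blast
  moreover have "- {y. ereal (q y) + f y \<le> ereal c} = {y. ereal c < ereal (q y) + f y}"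
    by auto
  ultimately show ?thesis
    by (simp add: closed_def)
qed

definition prox_minimizer :: "(real \<Rightarrow> ereal) \<Rightarrow> real \<Rightarrow> real \<Rightarrow> bool" where
  "prox_minimizer f z p \<longleftrightarrow> (\<forall>w. ereal ((z - p)\<^sup>2 / 2) + f p \<le> ereal ((z - w)\<^sup>2 / 2) + f w)"

lemma prox_eq_The_prox_minimizer: "prox f z = (THE p. prox_minimizer f z p)"
  unfolding prox_def prox_minimizer_def ..

lemma prox_minimizer_finite:
  assumes "prox_minimizer f z p" and "f x\<^sub>0 \<noteq> \<infinity>"
  shows "f p \<noteq> \<infinity>"
proof
  assume "f p = \<infinity>"
  then have "ereal ((z - x\<^sub>0)\<^sup>2 / 2) + f x\<^sub>0 = \<infinity>"
    using assms(1)[unfolded prox_minimizer_def, rule_format, of x\<^sub>0] by simp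
  then show False
    using assms(2) by simp
qed

text \<open>The sublevel sets of the prox objective are compact and nested; their intersection
  consists of minimizers.\<close>

lemma prox_minimizer_exists:
  fixes f :: "real \<Rightarrow> ereal"
  assumes lsc: "lsc_efun f" and nonneg: "\<And>t. f t \<ge> 0" and finite_at: "f x\<^sub>0 \<noteq> \<infinity>"
  shows "\<exists>p. prox_minimizer f z p"
proof -
  define q where "q y = (z - y)\<^sup>2 / 2" for y
  define g where "g y = ereal (q y) + f y" for y
  define m where "m = Inf (range g)"
  have m_le: "m \<le> g y" for y
    unfolding m_def by (rule Inf_lower) simp
  have q_le_g: "ereal (q y) \<le> g y" for y
    unfolding g_def using nonneg[of y] by (simp add: add_increasing2)
  have "0 \<le> m"
    unfolding m_def by (rule Inf_greatest) (auto simp: g_def q_def intro!: add_nonneg_nonneg nonneg)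
  moreover have "m < \<infinity>"
    using m_le[of x\<^sub>0] finite_at by (auto simp: g_def q_def)
  ultimately obtain r where r: "m = ereal r"
    by (cases m) auto
  define F where "F n = {y. g y \<le> ereal (r + 1 / Suc n)}" for n :: nat
  have "\<Inter>(range F) \<noteq> {}"
  proof (rule compact_nest)
    fix n
    have "m < ereal (r + 1 / Suc n)"
      using r by simp
    then obtain y where "g y < ereal (r + 1 / Suc n)"
      unfolding m_def Inf_less_iff by blast
    then show "F n \<noteq> {}"
      unfolding F_def by (blast intro: less_imp_le)
    have "continuous_on UNIV q"
      unfolding q_def by (intro continuous_intros) auto
    then have "closed (F n)"
      unfolding F_def g_def by (rule closed_sublevel_continuous_add_lsc[OF _ lsc])
    moreover have "F n \<subseteq> cball z (sqrt (2 * (r + 1)))"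
    proof
      fix y assume "y \<in> F n"
      then have "q y \<le> r + 1 / Suc n"
        unfolding F_def using order.trans[OF q_le_g[of y]] by force
      moreover have "1 / Suc n \<le> (1::real)"
        by simp
      ultimately have "q y \<le> r + 1"
        by linarith
      then have "(z - y)\<^sup>2 \<le> 2 * (r + 1)"
        unfolding q_def by simp
      then show "y \<in> cball z (sqrt (2 * (r + 1)))"
        using real_sqrt_le_mono[of "(z - y)\<^sup>2"] by (simp add: dist_real_def)
    qed
    ultimately show "compact (F n)"
      using bounded_cball bounded_subset compact_eq_bounded_closed by blast
  next
    fix k n :: nat assume "k \<le> n"
    then have "1 / real (Suc n) \<le> 1 / Suc k"
      by (simp add: frac_le)
    then show "F n \<subseteq> F k"
      unfolding F_def using order.trans by fastforce
  qed
  then obtain p where p: "\<And>n. g p \<le> ereal (r + 1 / Suc n)"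
    unfolding F_def by blast
  have "g p \<le> m"
    unfolding r
  proof (rule ereal_le_epsilon2)
    fix e :: real assume "0 < e"
    then obtain n :: nat where "1 / Suc n < e"
      using nat_approx_posE by blast
    then show "g p \<le> ereal r + ereal e"
      using order.trans[OF p[of n]] by simp
  qed
  then show ?thesis
    using order.trans[OF _ m_le] unfolding prox_minimizer_def g_def q_def by blast
qed

lemma le_of_le_add_small_multiples:
  fixes a b c :: real
  assumes "\<And>t. 0 < t \<Longrightarrow> t \<le> 1 \<Longrightarrow> a \<le> b + t * c" and "c \<ge> 0"
  shows "a \<le> b"
proof (rule ccontr)
  assume "\<not> a \<le> b"
  define t where "t = min 1 ((a - b) / (c + 1))"
  have t: "0 < t" "t \<le> 1"
    using \<open>\<not> a \<le> b\<close> assms(2) by (auto simp: t_def)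
  have "t * c \<le> (a - b) / (c + 1) * c"
    using t assms(2) by (intro mult_right_mono) (auto simp: t_def)
  also have "\<dots> < a - b"
    using \<open>\<not> a \<le> b\<close> assms(2) by (simp add: field_simps)
  finally show False
    using assms(1)[OF t] by linarith
qed

lemma prox_minimizer_subgradient:
  fixes f :: "real \<Rightarrow> ereal"
  assumes conv: "convex_efun f" and not_minf: "\<And>t. f t \<noteq> -\<infinity>" and finite_at: "f p \<noteq> \<infinity>"
    and min: "prox_minimizer f z p"
  shows "f p + ereal ((z - p) * (w - p)) \<le> f w"
proof (cases "f w")
  case PInf
  then show ?thesis by simp
next
  case MInf
  then show ?thesis using not_minf by blast
next
  case (real b)
  obtain a where a: "f p = ereal a"
    using finite_at not_minf[of p] by (cases "f p") auto
  have "a \<le> b - (z - p) * (w - p) + t * ((w - p)\<^sup>2 / 2)" if t: "0 < t" "t \<le> 1" for t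
  proof -
    define w\<^sub>t where "w\<^sub>t = (1 - t) * p + t * w"
    have "f w\<^sub>t \<le> ereal (1 - t) * f p + ereal t * f w"
      using conv t unfolding convex_efun_def w\<^sub>t_def by simp
    then have "f w\<^sub>t \<le> ereal ((1 - t) * a + t * b)"
      by (simp add: a real)
    then have "ereal ((z - p)\<^sup>2 / 2) + f p \<le> ereal ((z - w\<^sub>t)\<^sup>2 / 2) + ereal ((1 - t) * a + t * b)"
      using min[unfolded prox_minimizer_def, rule_format, of w\<^sub>t] add_left_mono order.trans by blast
    then have "(z - p)\<^sup>2 / 2 + a \<le> (z - w\<^sub>t)\<^sup>2 / 2 + ((1 - t) * a + t * b)"
      by (simp add: a)
    moreover have "(z - w\<^sub>t)\<^sup>2 = (z - p)\<^sup>2 - 2 * t * ((z - p) * (w - p)) + t * (t * (w - p)\<^sup>2)"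
      unfolding w\<^sub>t_def by (simp add: power2_eq_square algebra_simps)
    moreover have "(1 - t) * a + t * b = a - t * a + t * b"
      by (simp add: algebra_simps)
    ultimately have "t * a \<le> t * b - t * ((z - p) * (w - p)) + t * (t * (w - p)\<^sup>2) / 2"
      by linarith
    also have "\<dots> = t * (b - (z - p) * (w - p) + t * ((w - p)\<^sup>2 / 2))"
      by (simp add: algebra_simps)
    finally have "t * a \<le> \<dots>" .
    then show ?thesis
      using t(1) by simp
  qed
  then have "a \<le> b - (z - p) * (w - p)"
    by (rule le_of_le_add_small_multiples) auto
  then show ?thesis
    by (simp add: a real)
qed

lemma prox_minimizer_unique:
  fixes f :: "real \<Rightarrow> ereal"
  assumes conv: "convex_efun f" and not_minf: "\<And>t. f t \<noteq> -\<infinity>"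
    and "f p \<noteq> \<infinity>" "prox_minimizer f z p"
    and "f p' \<noteq> \<infinity>" "prox_minimizer f z p'"
  shows "p' = p"
proof -
  obtain a a' where a: "f p = ereal a" "f p' = ereal a'"
    using assms(3,5) not_minf[of p] not_minf[of p'] by (cases "f p"; cases "f p'") auto
  have "a + (z - p) * (p' - p) \<le> a'" "a' + (z - p') * (p - p') \<le> a"
    using prox_minimizer_subgradient[OF conv not_minf assms(3,4), of p']
      prox_minimizer_subgradient[OF conv not_minf assms(5,6), of p] a by simp_all
  moreover have "(z - p) * (p' - p) + (z - p') * (p - p') = (p' - p)\<^sup>2"
    by (simp add: power2_eq_square algebra_simps)
  ultimately have "(p' - p)\<^sup>2 \<le> 0"
    by linarith
  then show ?thesis
    by simp
qed

lemma prox_subgradient: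
  fixes f :: "real \<Rightarrow> ereal"
  assumes conv: "convex_efun f" and lsc: "lsc_efun f" and nonneg: "\<And>t. f t \<ge> 0"
    and finite_at: "f x\<^sub>0 \<noteq> \<infinity>"
  shows "f (prox f z) \<noteq> \<infinity>"
    and "f (prox f z) + ereal ((z - prox f z) * (w - prox f z)) \<le> f w"
proof -
  have not_minf: "f t \<noteq> -\<infinity>" for t
    using nonneg[of t] by auto
  obtain p where p: "prox_minimizer f z p"
    using prox_minimizer_exists[OF lsc nonneg finite_at] by blast
  have p_finite: "f p \<noteq> \<infinity>"
    by (rule prox_minimizer_finite[OF p finite_at])
  have "prox f z = p"
    unfolding prox_eq_The_prox_minimizer
  proof (rule the_equality)
    show "y = p" if "prox_minimizer f z y" for y
      using prox_minimizer_unique[OF conv not_minf p_finite p prox_minimizer_finite[OF that finite_at] that] .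
  qed (fact p)
  then show "f (prox f z) \<noteq> \<infinity>" "f (prox f z) + ereal ((z - prox f z) * (w - prox f z)) \<le> f w"
    using p_finite prox_minimizer_subgradient[OF conv not_minf p_finite p] by auto
qed

lemma l2_summable_mult:
  fixes a b :: "'i \<Rightarrow> real"
  assumes "a \<in> l2" "b \<in> l2"
  shows "(\<lambda>i. a i * b i) summable_on UNIV"
proof -
  have "(\<lambda>i. norm (a i * a i)) summable_on UNIV" "(\<lambda>i. norm (b i * b i)) summable_on UNIV"
    using assms unfolding l2_def by (simp_all add: power2_eq_square)
  then have "(\<lambda>i. norm (a i * b i)) summable_on UNIV"
    by (rule abs_summable_product)
  then show ?thesis
    using summable_on_iff_abs_summable_on_real by blast
qed

lemma l2_diff:
  fixes a b :: "'i \<Rightarrow> real"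
  assumes "a \<in> l2" "b \<in> l2"
  shows "(\<lambda>i. a i - b i) \<in> l2"
proof -
  have "(\<lambda>i. 2 * (a i)\<^sup>2 + 2 * (b i)\<^sup>2) summable_on UNIV"
    using assms unfolding l2_def by (intro summable_on_add summable_on_cmult_right) simp_all
  then show ?thesis
    unfolding l2_def mem_Collect_eq
  proof (rule summable_on_comparison_test)
    fix i
    have "2 * (a i)\<^sup>2 + 2 * (b i)\<^sup>2 = (a i - b i)\<^sup>2 + (a i + b i)\<^sup>2"
      by (simp add: power2_eq_square algebra_simps)
    then show "(a i - b i)\<^sup>2 \<le> 2 * (a i)\<^sup>2 + 2 * (b i)\<^sup>2"
      by simp
  qed simp
qed

lemma l2_bounded_mult:
  fixes a c :: "'i \<Rightarrow> real"
  assumes "a \<in> l2" "\<And>i. \<bar>c i\<bar> \<le> K"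
  shows "(\<lambda>i. c i * a i) \<in> l2"
proof -
  have "(\<lambda>i. K\<^sup>2 * (a i)\<^sup>2) summable_on UNIV"
    using assms unfolding l2_def by (intro summable_on_cmult_right) simp
  then show ?thesis
    unfolding l2_def mem_Collect_eq
  proof (rule summable_on_comparison_test)
    fix i
    have "(c i)\<^sup>2 \<le> K\<^sup>2"
      using power_mono[OF assms(2), where n=2] by simp
    then show "(c i * a i)\<^sup>2 \<le> K\<^sup>2 * (a i)\<^sup>2"
      by (simp add: power_mult_distrib mult_right_mono)
  qed simp
qed

lemma reg_R_eq_infsum:
  assumes "\<And>i. s \<alpha> i (\<kappa> i * x i) = ereal (b i)" and "b summable_on UNIV"
  shows "reg_R s \<kappa> \<alpha> x = ereal (\<Sum>\<^sub>\<infinity>i. b i)"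
  using assms by (simp add: reg_R_def)

lemma reg_R_subgradient:
  fixes x d b :: "'i \<Rightarrow> real"
  assumes x: "x \<in> l2" and d: "d \<in> l2" and bounded: "\<And>i. \<bar>\<kappa> i\<bar> \<le> K"
    and b: "\<And>i. s \<alpha> i (\<kappa> i * x i) = ereal (b i)" and summable: "b summable_on UNIV"
    and subgradient: "\<And>i w. s \<alpha> i (\<kappa> i * x i) + ereal (d i * (w - \<kappa> i * x i)) \<le> s \<alpha> i w"
  shows "(\<lambda>i. \<kappa> i * d i) \<in> subdiff_l2 (reg_R s \<kappa> \<alpha>) x"
  unfolding subdiff_l2_def mem_Collect_eq
proof (intro conjI ballI)
  show \<xi>: "(\<lambda>i. \<kappa> i * d i) \<in> l2"
    by (rule l2_bounded_mult[OF d bounded])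
  fix y :: "'i \<Rightarrow> real" assume y: "y \<in> l2"
  show "reg_R s \<kappa> \<alpha> x + ereal (l2_inner (\<lambda>i. \<kappa> i * d i) (\<lambda>i. y i - x i)) \<le> reg_R s \<kappa> \<alpha> y"
  proof (cases "reg_R s \<kappa> \<alpha> y = \<infinity>")
    case False
    define a where "a i = real_of_ereal (s \<alpha> i (\<kappa> i * y i))" for i
    have a: "s \<alpha> i (\<kappa> i * y i) = ereal (a i)" for i
      using False subgradient[of i "\<kappa> i * y i"] b[of i] unfolding a_def reg_R_def
      by (cases "s \<alpha> i (\<kappa> i * y i)") (auto split: if_splits)
    have a_summable: "a summable_on UNIV"
      using False unfolding reg_R_def a_def by (auto split: if_splits)
    have inner_summable: "(\<lambda>i. \<kappa> i * d i * (y i - x i)) summable_on UNIV"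
      by (rule l2_summable_mult[OF \<xi> l2_diff[OF y x]])
    have "(\<Sum>\<^sub>\<infinity>i. b i) + (\<Sum>\<^sub>\<infinity>i. \<kappa> i * d i * (y i - x i))
        = (\<Sum>\<^sub>\<infinity>i. b i + \<kappa> i * d i * (y i - x i))"
      by (rule infsum_add[symmetric, OF summable inner_summable])
    also have "\<dots> \<le> (\<Sum>\<^sub>\<infinity>i. a i)"
    proof (rule infsum_mono[OF summable_on_add[OF summable inner_summable] a_summable])
      fix i
      show "b i + \<kappa> i * d i * (y i - x i) \<le> a i"
        using subgradient[of i "\<kappa> i * y i"] unfolding b a by (simp add: algebra_simps)
    qed
    finally show ?thesis
      unfolding l2_inner_def reg_R_eq_infsum[of s \<alpha> \<kappa> x, OF b summable]
        reg_R_eq_infsum[of s \<alpha> \<kappa> y, OF a a_summable]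
      by simp
  qed simp
qed

lemma reg_R_finite_and_subgradient_at_prox:
  fixes z x :: "'i \<Rightarrow> real"
  assumes z: "z \<in> l2" and p: "(\<lambda>i. prox (s \<alpha> i) (z i)) \<in> l2" and x: "x \<in> l2"
    and kx: "\<And>i. \<kappa> i * x i = prox (s \<alpha> i) (z i)" and bounded: "\<And>i. \<bar>\<kappa> i\<bar> \<le> K"
    and s: "\<And>i. convex_efun (s \<alpha> i) \<and> lsc_efun (s \<alpha> i) \<and> s \<alpha> i 0 = 0 \<and> (\<forall>t. s \<alpha> i t \<ge> 0)"
  shows "reg_R s \<kappa> \<alpha> x < \<infinity>"
    and "(\<lambda>i. \<kappa> i * (z i - prox (s \<alpha> i) (z i))) \<in> subdiff_l2 (reg_R s \<kappa> \<alpha>) x"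
proof -
  define p where "p i = prox (s \<alpha> i) (z i)" for i
  have sub: "s \<alpha> i (p i) \<noteq> \<infinity>" "s \<alpha> i (p i) + ereal ((z i - p i) * (w - p i)) \<le> s \<alpha> i w" for i w
    using prox_subgradient[of "s \<alpha> i" 0 "z i"] s[of i] unfolding p_def by auto
  define b where "b i = real_of_ereal (s \<alpha> i (p i))" for i
  have b: "s \<alpha> i (\<kappa> i * x i) = ereal (b i)" for i
    using sub(1)[of i] s[of i] unfolding kx p_def[symmetric] b_def by (cases "s \<alpha> i (p i)") auto
  have "b summable_on UNIV"
  proof (rule summable_on_comparison_test)
    show "(\<lambda>i. (z i - p i) * p i) summable_on UNIV"
      using l2_summable_mult[OF l2_diff[OF z p] p] unfolding p_def .
    show "b i \<le> (z i - p i) * p i" for i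
      using sub(2)[of i 0] s[of i] b[of i] unfolding kx p_def[symmetric] by auto
    show "0 \<le> b i" for i
      using s[of i] unfolding b_def by (simp add: real_of_ereal_pos)
  qed
  then show "reg_R s \<kappa> \<alpha> x < \<infinity>"
    using reg_R_eq_infsum[of s \<alpha> \<kappa> x, OF b] by simp
  show "(\<lambda>i. \<kappa> i * (z i - prox (s \<alpha> i) (z i))) \<in> subdiff_l2 (reg_R s \<kappa> \<alpha>) x"
    using reg_R_subgradient[where s=s and \<alpha>=\<alpha>, OF x l2_diff[OF z p] bounded b \<open>b summable_on UNIV\<close>] sub(2)
    unfolding kx p_def by blast
qed

theorem lemma3p5:
  fixes \<phi> :: "real \<Rightarrow> real \<Rightarrow> real \<Rightarrow> real"
    and \<kappa> :: "'i::countable \<Rightarrow> real"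
    and s :: "real \<Rightarrow> 'i \<Rightarrow> real \<Rightarrow> ereal"
    and \<alpha> :: real
  assumes filt: "nonlinear_reg_filter \<phi>"
    and kpos: "\<And>i. \<kappa> i > 0"
    and kbdd: "bdd_above (range \<kappa>)"
    and s_props: "\<And>a i. a > 0 \<Longrightarrow>
        proper_fun (s a i) \<and> convex_efun (s a i) \<and> lsc_efun (s a i) \<and>
        s a i 0 = 0 \<and> (\<forall>t. s a i t \<ge> 0) \<and> \<phi> a (\<kappa> i) = prox (s a i)"
    and apos: "\<alpha> > 0"
  shows "MPhi_ran \<phi> \<alpha> \<kappa> \<subseteq> efun_dom (reg_R s \<kappa> \<alpha>)
         \<and> MPhi_ran \<phi> \<alpha> \<kappa> \<subseteq> subdiff_dom (reg_R s \<kappa> \<alpha>)"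
proof -
  \<comment> \<open>Only the representation \<open>\<phi> \<alpha> (\<kappa> i) = prox (s \<alpha> i)\<close> is used, not the filter axioms \<open>filt\<close>.\<close>
  obtain K where "\<And>i. \<kappa> i \<le> K"
    using kbdd unfolding bdd_above_def by blast
  then have K: "\<bar>\<kappa> i\<bar> \<le> K" for i
    using kpos[of i] by simp
  have "x \<in> efun_dom (reg_R s \<kappa> \<alpha>) \<and> x \<in> subdiff_dom (reg_R s \<kappa> \<alpha>)"
    if x_ran: "x \<in> MPhi_ran \<phi> \<alpha> \<kappa>" for x
  proof -
    obtain z where z: "z \<in> MPhi_dom \<phi> \<alpha> \<kappa>" and x: "x = M_pinv \<kappa> (Phi_op \<phi> \<alpha> \<kappa> z)"
      using x_ran unfolding MPhi_ran_def by blast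
    have prox_z: "Phi_op \<phi> \<alpha> \<kappa> z = (\<lambda>i. prox (s \<alpha> i) (z i))"
      using s_props[OF apos] unfolding Phi_op_def by simp
    have l2: "x \<in> l2" "z \<in> l2" "(\<lambda>i. prox (s \<alpha> i) (z i)) \<in> l2"
      using z unfolding x MPhi_dom_def M_pinv_dom_def M_pinv_def prox_z[symmetric] by simp_all
    have kx: "\<kappa> i * x i = prox (s \<alpha> i) (z i)" for i
      using kpos[of i] unfolding x M_pinv_def prox_z by simp
    have "convex_efun (s \<alpha> i) \<and> lsc_efun (s \<alpha> i) \<and> s \<alpha> i 0 = 0 \<and> (\<forall>t. s \<alpha> i t \<ge> 0)" for i
      using s_props[OF apos] by blast
    note reg_R_finite_and_subgradient_at_prox[where s=s and \<alpha>=\<alpha>, OF l2(2,3,1) kx K this]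
    with l2(1) show ?thesis
      unfolding efun_dom_def subdiff_dom_def by blast
  qed
  then show ?thesis
    by blast
qed

end
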